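(* Let $L\ge1$ be an integer and $r\in[0,\frac{L}{L+1})$. There exists $N=N(r,L)$ such that for all integers $q\ge 2$ with $L\le q$ and all $n\ge N$ with $rn\in\mathbb{N}$ and $rn\equiv L-1\pmod L$, every $(r,L)$ list-decodable code $C\subseteq[q]^n$ satisfies $|C|\le q^{\,n-\lfloor\frac{L+1}{L}rn\rfloor}$.
   Context: $[q]=\{1,\dots,q\}$. A code is a subset $C\subseteq[q]^n$. $B_t(v)$ denotes the Hamming ball of radius $t$ around $v\in[q]^n$ (Hamming distance = number of differing coordinates). A code $C$ is $(r,L)$ list-decodable if $|B_{rn}(v)\cap C|\le L$ for all $v\in[q]^n$. *)

theory Defs
  imports Main "HOL-Library.Cardinality" Complex_Main
begin

definition words :: "nat \<Rightarrow> nat \<Rightarrow> nat list set" where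
  "words q n = {v. length v = n \<and> set v \<subseteq> {1..q}}"

definition hamming_dist :: "nat list \<Rightarrow> nat list \<Rightarrow> nat" where
  "hamming_dist u v = card {i. i < length u \<and> u ! i \<noteq> v ! i}"

definition hamming_ball :: "nat \<Rightarrow> nat \<Rightarrow> real \<Rightarrow> nat list \<Rightarrow> nat list set" where
  "hamming_ball q n t v = {u \<in> words q n. real (hamming_dist u v) \<le> t}"

definition list_decodable :: "nat \<Rightarrow> nat \<Rightarrow> real \<Rightarrow> nat \<Rightarrow> nat list set \<Rightarrow> bool" where
  "list_decodable q n r L C \<longleftrightarrow>
     (\<forall>v \<in> words q n. card (hamming_ball q n (r * real n) v \<inter> C) \<le> L)"

end

theory Submission
  imports Defs "HOL-Library.FuncSet"
begin

text \<open>
  Write k = rn = L(a + 1) - 1 and s = n - (k + a + 1); then the claimed bound is q^(s+1).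
  If C were larger, pigeonholing on prefixes of length s gives more than q codewords with a
  common prefix, and among them two, x and y, that also agree at position s. Extend them to
  L + 1 distinct codewords w_0 = x, ..., w_L = y of that class, cut the remaining
  (L + 1)(a + 1) - 1 positions into L + 1 consecutive blocks of length a + 1 (the last one
  short by one), and let v copy w_j on block j. Every w_j agrees with v on the prefix and on
  a+1 further positions (for w_L: its short block and position s), so all L + 1 codewords lie
  within distance k = rn of v, contradicting list decodability.
\<close>

lemma words_eq_lists: "words q n = {xs. set xs \<subseteq> {1..q} \<and> length xs = n}"
  unfolding words_def by auto

lemma finite_words: "finite (words q n)"
  unfolding words_eq_lists by (rule finite_lists_length_eq) simp

lemma card_words: "card (words q n) = q ^ n"
  unfolding words_eq_lists by (subst card_lists_length_eq) simp_all

lemma take_in_words: "v \<in> words q n \<Longrightarrow> s \<le> n \<Longrightarrow> take s v \<in> words q s"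
  unfolding words_def using set_take_subset by fastforce

lemma nth_in_alphabet: "v \<in> words q n \<Longrightarrow> i < n \<Longrightarrow> v ! i \<in> {1..q}"
  unfolding words_def using nth_mem by blast

lemma hamming_dist_le_card_diff:
  assumes "length u = n" "A \<subseteq> {..<n}" "\<And>i. i \<in> A \<Longrightarrow> u ! i = v ! i"
  shows "hamming_dist u v \<le> n - card A"
proof -
  have "{i. i < length u \<and> u ! i \<noteq> v ! i} \<subseteq> {..<n} - A"
    using assms by auto
  then have "hamming_dist u v \<le> card ({..<n} - A)"
    unfolding hamming_dist_def by (intro card_mono) auto
  also have "\<dots> = n - card A"
    using assms(2) by (simp add: card_Diff_subset finite_subset)
  finally show ?thesis .
qed

lemma hamming_dist_le_if_agree_on_prefix_and_interval:
  assumes "length u = n" "p \<le> c" "c + d \<le> n"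
    and "\<And>i. i < p \<Longrightarrow> u ! i = v ! i" "\<And>i. c \<le> i \<Longrightarrow> i < c + d \<Longrightarrow> u ! i = v ! i"
  shows "hamming_dist u v \<le> n - (p + d)"
proof -
  have "{..<p} \<union> {c..<c + d} \<subseteq> {..<n}" using assms(2,3) by auto
  then have "hamming_dist u v \<le> n - card ({..<p} \<union> {c..<c + d})"
    using assms(1,4,5) by (intro hamming_dist_le_card_diff) auto
  also have "card ({..<p} \<union> {c..<c + d}) = p + d"
    using assms(2) by (subst card_Un_disjoint) auto
  finally show ?thesis .
qed

lemma exists_large_prefix_class:
  assumes "C \<subseteq> words q n" "s \<le> n" "m * q ^ s < card C"
  shows "\<exists>p. m < card {w \<in> C. take s w = p}"
proof -
  have fin: "finite C" using assms(1) finite_words finite_subset by blast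
  have maps: "take s \<in> C \<rightarrow> words q s" using assms(1,2) take_in_words by blast
  have "C \<noteq> {}" using assms(3) by auto
  then have "words q s \<noteq> {}" using maps by blast
  then obtain p where "card C \<le> card (take s -` {p} \<inter> C) * card (words q s)"
    using pigeonhole_card[OF maps fin finite_words] by blast
  moreover have "take s -` {p} \<inter> C = {w \<in> C. take s w = p}" by blast
  ultimately have "m * q ^ s < card {w \<in> C. take s w = p} * q ^ s"
    using assms(3) card_words by (metis order_less_le_trans)
  then show ?thesis using mult_less_cancel2 by blast
qed

lemma exists_two_agree_at:
  assumes "F \<subseteq> words q n" "i < n" "q < card F"
  shows "\<exists>x\<in>F. \<exists>y\<in>F. x \<noteq> y \<and> x ! i = y ! i"
proof -
  have "(\<lambda>w. w ! i) ` F \<subseteq> {1..q}" using assms(1,2) nth_in_alphabet by blast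
  then have "card ((\<lambda>w. w ! i) ` F) \<le> q"
    using card_mono[of "{1..q}"] by fastforce
  then have "card ((\<lambda>w. w ! i) ` F) < card F" using assms(3) by linarith
  then have "\<not> inj_on (\<lambda>w. w ! i) F" by (rule pigeonhole)
  then show ?thesis unfolding inj_on_def by blast
qed

lemma obtain_distinct_list_with_ends:
  assumes "finite F" "x \<in> F" "y \<in> F" "x \<noteq> y" "m + 2 \<le> card F"
  obtains ws where "distinct ws" "set ws \<subseteq> F" "length ws = m + 2" "hd ws = x" "last ws = y"
proof -
  have "m \<le> card (F - {x, y})" using assms by (simp add: card_Diff_subset)
  then obtain G where G: "G \<subseteq> F - {x, y}" "card G = m" "finite G"
    by (rule obtain_subset_with_card_n)
  obtain ys where "set ys = G" "distinct ys" using finite_distinct_list[OF G(3)] by blast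
  with G assms(2-4) have "distinct (x # ys @ [y])" "set (x # ys @ [y]) \<subseteq> F"
    and "length (x # ys @ [y]) = m + 2"
    by (auto simp: distinct_card[symmetric])
  then show ?thesis using that[of "x # ys @ [y]"] by simp
qed

text \<open>Positions below s read from ws ! 0 as well, since (i - s) div b = 0 there.\<close>
definition block_center :: "nat \<Rightarrow> nat \<Rightarrow> nat list list \<Rightarrow> nat \<Rightarrow> nat list" where
  "block_center s b ws n = map (\<lambda>i. ws ! ((i - s) div b) ! i) [0..<n]"

lemma nth_block_center: "i < n \<Longrightarrow> block_center s b ws n ! i = ws ! ((i - s) div b) ! i"
  by (simp add: block_center_def)

lemma block_index_less:
  assumes "ws \<noteq> []" "0 < b" "n \<le> s + length ws * b" "i < n"
  shows "(i - s) div b < length ws"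
proof -
  have "i - s < length ws * b" using assms by (cases "i < s") auto
  then show ?thesis by (simp add: less_mult_imp_div_less)
qed

lemma block_center_in_words:
  assumes "set ws \<subseteq> words q n" "ws \<noteq> []" "0 < b" "n \<le> s + length ws * b"
  shows "block_center s b ws n \<in> words q n"
proof -
  have "block_center s b ws n ! i \<in> {1..q}" if "i < n" for i
  proof -
    have "ws ! ((i - s) div b) \<in> words q n"
      using block_index_less[OF assms(2-4) that] assms(1) nth_mem by blast
    then show ?thesis using that nth_in_alphabet by (simp add: nth_block_center)
  qed
  then show ?thesis by (auto simp: words_def block_center_def)
qed

lemma block_center_nth_prefix:
  "ws \<noteq> [] \<Longrightarrow> i < s \<Longrightarrow> i < n \<Longrightarrow> block_center s b ws n ! i = hd ws ! i"
  by (simp add: nth_block_center hd_conv_nth)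

lemma block_center_nth_block:
  assumes "0 < b" "s + t * b \<le> i" "i < s + t * b + b" "i < n"
  shows "block_center s b ws n ! i = ws ! t ! i"
proof -
  have "(i - s) div b = t"
    using assms by (intro div_nat_eqI) (auto simp: algebra_simps)
  then show ?thesis using assms(4) by (simp add: nth_block_center)
qed

lemma hamming_dist_block_center:
  assumes ws: "set ws \<subseteq> words q n" "1 < length ws"
    and b: "0 < b" "n + 1 = s + length ws * b"
    and prefix: "\<And>w. w \<in> set ws \<Longrightarrow> take s w = take s (hd ws)"
    and ends: "hd ws ! s = last ws ! s"
    and t: "t < length ws"
  shows "hamming_dist (ws ! t) (block_center s b ws n) \<le> n - (s + b)"
proof -
  define v where "v = block_center s b ws n"
  have ne: "ws \<noteq> []" using ws(2) by auto
  have w: "ws ! t \<in> set ws" using t by simp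
  then have len: "length (ws ! t) = n" using ws(1) by (auto simp: words_def)
  have "s + 2 * b \<le> n + 1"
    using b ws(2) mult_le_mono1[of 2 "length ws" b] by linarith
  then have sn: "s < n" using b(1) by linarith
  have agree_prefix: "ws ! t ! i = v ! i" if "i < s" for i
    using prefix[OF w] that sn block_center_nth_prefix[OF ne]
    by (metis nth_take order.strict_trans v_def)
  have agree_block: "ws ! t ! i = v ! i" if "s + t * b \<le> i" "i < s + t * b + b" "i < n" for i
    using block_center_nth_block[OF b(1) that] by (simp add: v_def)
  consider "t + 1 < length ws" | "t + 1 = length ws" using t by linarith
  then show ?thesis
  proof cases
    case 1
    then have "s + t * b + b \<le> n"
      using b mult_le_mono1[of "t + 2" "length ws" b] by (simp add: algebra_simps)
    then show ?thesis unfolding v_def[symmetric]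
      using len agree_prefix agree_block
      by (intro hamming_dist_le_if_agree_on_prefix_and_interval) auto
  next
    case 2
    then have "ws ! t = last ws" using ne by (metis add_diff_cancel_right' last_conv_nth)
    then have "ws ! t ! s = v ! s"
      using ends sn by (simp add: v_def nth_block_center hd_conv_nth[OF ne])
    then have agree_prefix': "ws ! t ! i = v ! i" if "i < s + 1" for i
      using that agree_prefix less_Suc_eq by auto
    have "1 \<le> t" using 2 ws(2) by linarith
    then have start: "s + 1 \<le> s + t * b" using b(1) by (simp add: Suc_leI)
    have "n + 1 = s + t * b + b" using b(2) by (simp add: algebra_simps flip: 2)
    then have stop: "s + t * b + (b - 1) = n" using b(1) by linarith
    have "hamming_dist (ws ! t) v \<le> n - (s + 1 + (b - 1))"
      using start stop len agree_prefix' agree_block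
      by (intro hamming_dist_le_if_agree_on_prefix_and_interval[of _ _ "s + 1" "s + t * b"]) auto
    then show ?thesis using b(1) by (simp add: v_def)
  qed
qed

lemma prefix_class_exists_center:
  assumes Fw: "F \<subseteq> words q n" and prefix: "\<And>w. w \<in> F \<Longrightarrow> take s w = p"
    and F: "q < card F" and L: "1 \<le> L" "L \<le> q"
    and b: "0 < b" "n + 1 = s + (L + 1) * b"
  obtains v W where "v \<in> words q n" "W \<subseteq> F" "card W = L + 1"
    "\<And>w. w \<in> W \<Longrightarrow> hamming_dist w v \<le> n - (s + b)"
proof -
  have "1 \<le> L * b" using L(1) b(1) by simp
  moreover have "n + 1 = s + L * b + b" using b(2) by (simp add: algebra_simps)
  ultimately have "s < n" using b(1) by linarith
  then obtain x y where xy: "x \<in> F" "y \<in> F" "x \<noteq> y" "x ! s = y ! s"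
    using exists_two_agree_at[OF Fw _ F] by blast
  have "(L - 1) + 2 \<le> card F" using F L by simp
  then obtain ws where ws: "distinct ws" "set ws \<subseteq> F" "length ws = (L - 1) + 2"
    and ends: "hd ws = x" "last ws = y"
    using obtain_distinct_list_with_ends[OF finite_subset[OF Fw finite_words] xy(1-3)] by blast
  have len: "length ws = L + 1" using ws(3) L(1) by simp
  have ws_words: "set ws \<subseteq> words q n" using ws(2) Fw by blast
  have n: "n + 1 = s + length ws * b" using b(2) len by simp
  have common_prefix: "take s w = take s (hd ws)" if "w \<in> set ws" for w
    using that ws(2) ends(1) xy(1) prefix by auto
  have ends_agree: "hd ws ! s = last ws ! s" using ends xy(4) by simp
  have close: "hamming_dist w (block_center s b ws n) \<le> n - (s + b)" if w: "w \<in> set ws" for w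
  proof -
    obtain t where t: "t < length ws" "w = ws ! t" using w by (auto simp: in_set_conv_nth)
    have "1 < length ws" using len L(1) by simp
    then have "hamming_dist (ws ! t) (block_center s b ws n) \<le> n - (s + b)"
      using hamming_dist_block_center[OF ws_words _ b(1) n common_prefix ends_agree t(1)] by blast
    then show ?thesis using t(2) by simp
  qed
  have center: "block_center s b ws n \<in> words q n"
    using ws_words len b(1) n by (intro block_center_in_words) auto
  have card: "card (set ws) = L + 1" using distinct_card[OF ws(1)] len by simp
  show ?thesis by (rule that[OF center ws(2) card close])
qed

lemma card_le_if_list_decodable:
  fixes r :: real
  assumes C: "C \<subseteq> words q n" and ld: "list_decodable q n r L C"
    and L: "1 \<le> L" "L \<le> q"
    and k: "k + 1 = L * (a + 1)" "n = s + k + a + 1" "real k \<le> r * real n"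
  shows "card C \<le> q ^ (s + 1)"
proof (rule ccontr)
  assume "\<not> ?thesis"
  then have "q * q ^ s < card C" by simp
  then obtain p where big: "q < card {w \<in> C. take s w = p}"
    using exists_large_prefix_class[OF C] k(2) by fastforce
  have Fw: "{w \<in> C. take s w = p} \<subseteq> words q n" using C by blast
  have prefix: "\<And>w. w \<in> {w \<in> C. take s w = p} \<Longrightarrow> take s w = p" by simp
  have pos: "0 < a + 1" by simp
  have n: "n + 1 = s + (L + 1) * (a + 1)" using k(1,2) by (simp add: algebra_simps)
  obtain v W where v: "v \<in> words q n" and W: "W \<subseteq> {w \<in> C. take s w = p}" "card W = L + 1"
    and close: "\<And>w. w \<in> W \<Longrightarrow> hamming_dist w v \<le> n - (s + (a + 1))"
    using prefix_class_exists_center[OF Fw prefix big L pos n] by blast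
  have "W \<subseteq> hamming_ball q n (r * real n) v \<inter> C"
  proof
    fix w assume w: "w \<in> W"
    then have "w \<in> words q n \<inter> C" using W(1) C by blast
    moreover have "real (hamming_dist w v) \<le> r * real n"
      using close[OF w] k(2,3) by simp
    ultimately show "w \<in> hamming_ball q n (r * real n) v \<inter> C"
      by (simp add: hamming_ball_def)
  qed
  then have "card W \<le> card (hamming_ball q n (r * real n) v \<inter> C)"
    using C finite_words finite_subset by (intro card_mono) blast+
  also have "\<dots> \<le> L" using ld v unfolding list_decodable_def by blast
  finally show False using W(2) by simp
qed

lemma floor_succ_div_mult:
  assumes "0 < L"
  shows "\<lfloor>(real L + 1) / real L * real k\<rfloor> = int (k + k div L)"
proof -
  have "(real L + 1) / real L * real k = real k / real L + of_int (int k)"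
    using assms by (simp add: field_simps)
  then show ?thesis by (simp add: floor_add_int[symmetric] floor_divide_of_nat_eq)
qed

lemma mult_less_if_rate_less:
  fixes r :: real
  assumes "r < real L / (real L + 1)" "0 < n" "r * real n = real k"
  shows "(L + 1) * k < L * n"
proof -
  have "real ((L + 1) * k) = (real L + 1) * r * real n"
    using assms(3) by (simp add: algebra_simps)
  also have "\<dots> < real L * real n"
    using assms(1,2) by (simp add: pos_less_divide_eq mult_strict_right_mono mult.commute)
  finally show ?thesis by (simp only: of_nat_mult[symmetric] of_nat_less_iff)
qed

theorem corollary3p3:
  fixes L :: nat and r :: real
  assumes "L \<ge> 1" and "0 \<le> r" and "r < real L / (real L + 1)"
  shows "\<exists>N::nat. \<forall>q n k C. q \<ge> 2 \<longrightarrow> L \<le> q \<longrightarrow> n \<ge> N \<longrightarrow>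
           r * real n = real k \<longrightarrow> k mod L = (L - 1) mod L \<longrightarrow>
           C \<subseteq> words q n \<longrightarrow> list_decodable q n r L C \<longrightarrow>
           card C \<le> q ^ (n - nat \<lfloor>(real L + 1) / real L * real k\<rfloor>)"
proof (intro exI[of _ 1] allI impI)
  fix q n k C
  assume "q \<ge> 2" and q: "L \<le> q" and n: "n \<ge> 1" and rate: "r * real n = real k"
    and k: "k mod L = (L - 1) mod L" and C: "C \<subseteq> words q n" and ld: "list_decodable q n r L C"
  define a where "a = k div L"
  have ka: "k + 1 = L * (a + 1)"
    using div_mult_mod_eq[of k L] k assms(1) by (simp add: a_def algebra_simps)
  have "L * (k + a) \<le> (L + 1) * k"
    using ka assms(1) by (simp add: algebra_simps)
  also have "\<dots> < L * n"
    using mult_less_if_rate_less[OF assms(3) _ rate] n by simp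
  finally have "k + a + 1 \<le> n" by simp
  then have "card C \<le> q ^ (n - (k + a + 1) + 1)"
    using card_le_if_list_decodable[OF C ld assms(1) q ka] rate by simp
  moreover have "nat \<lfloor>(real L + 1) / real L * real k\<rfloor> = k + a"
    using floor_succ_div_mult[of L k] assms(1) by (simp add: a_def)
  ultimately show "card C \<le> q ^ (n - nat \<lfloor>(real L + 1) / real L * real k\<rfloor>)"
    using \<open>k + a + 1 \<le> n\<close> by (simp add: Suc_diff_Suc)
qed

end
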